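(* Let $n\ge 3$. Any generating set of the semigroup $\mathbf{W}^{\le 5}_{\mathrm{bf}}(n)$ has at least $(n-2)!$ elements.
   Context: Let $Q=\{0,\dots,n-1\}$ and $Q_M=\{1,\dots,n-3\}$. Transformations of $Q$ act on the right, $q(st)=(qs)t$. Let $\mathbf{B}_{\mathrm{bf}}(n)$ be the set of all transformations $t$ of $Q$ with $0\notin Qt$, $(n-1)t=n-1$, $(n-2)t=n-1$, and for all $j\ge1$, either $0t^j=n-1$ or $0t^j\ne qt^j$ for all $0<q<n-1$. Then $\mathbf{W}^{\le 5}_{\mathrm{bf}}(n)=\{t\in\mathbf{B}_{\mathrm{bf}}(n)\mid$ for all distinct $p,q\in Q_M$, $pt=qt=n-1$ or $pt\ne qt\}$, a semigroup under composition. *)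

theory Defs
  imports Main
begin

text \<open>Transformations of Q = {0..<n} are represented as functions nat \<Rightarrow> nat that map
  {0..<n} into itself and are the identity outside {0..<n} (so each transformation has a
  unique representative). Transformations act on the right: q(st) = (qs)t, hence the
  semigroup product s\<cdot>t is the function t \<circ> s.\<close>

definition is_transf :: "nat \<Rightarrow> (nat \<Rightarrow> nat) \<Rightarrow> bool" where
  "is_transf n t \<longleftrightarrow> (\<forall>q<n. t q < n) \<and> (\<forall>q\<ge>n. t q = q)"

definition tmul :: "(nat \<Rightarrow> nat) \<Rightarrow> (nat \<Rightarrow> nat) \<Rightarrow> (nat \<Rightarrow> nat)" where
  "tmul s t = t \<circ> s"

definition B_bf :: "nat \<Rightarrow> (nat \<Rightarrow> nat) set" where
  "B_bf n = {t. is_transf n t \<and> (\<forall>q<n. t q \<noteq> 0) \<and> t (n-1) = n-1 \<and> t (n-2) = n-1 \<and>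
     (\<forall>j\<ge>1. (t^^j) 0 = n-1 \<or> (\<forall>q. 0 < q \<and> q < n-1 \<longrightarrow> (t^^j) 0 \<noteq> (t^^j) q))}"

definition W5_bf :: "nat \<Rightarrow> (nat \<Rightarrow> nat) set" where
  "W5_bf n = {t \<in> B_bf n. \<forall>p q. p \<in> {1..n-3} \<and> q \<in> {1..n-3} \<and> p \<noteq> q \<longrightarrow>
      (t p = n-1 \<and> t q = n-1) \<or> t p \<noteq> t q}"

inductive_set sgrp_gen :: "(nat \<Rightarrow> nat) set \<Rightarrow> (nat \<Rightarrow> nat) set" for G where
  gen: "x \<in> G \<Longrightarrow> x \<in> sgrp_gen G"
| mul: "x \<in> sgrp_gen G \<Longrightarrow> y \<in> sgrp_gen G \<Longrightarrow> tmul x y \<in> sgrp_gen G"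

end

theory Submission
  imports Defs "HOL-Combinatorics.Permutations"
begin

text \<open>Every s \<in> W5_bf n that is injective on {0..<n-1} is indecomposable: in a product
  s = y \<circ> x of elements of B_bf n the factor x must then map {0..<n-1} bijectively onto
  {1..<n}, since 0 is not in its image, and y identifies n-2 and n-1. Hence every generating
  set contains all these elements, and among them are the (n-2)! transformations
  q \<mapsto> \<sigma> q + 1 on {0..<n-2} (n-2, n-1 \<mapsto> n-1) for the permutations \<sigma> of {0..<n-2}.\<close>

lemma finite_transf: "finite {t. is_transf n t}"
proof (rule finite_imageD)
  show "inj_on (\<lambda>t. restrict t {..<n}) {t. is_transf n t}"
  proof (rule inj_onI, rule ext)
    fix t u q
    assume "t \<in> {t. is_transf n t}" "u \<in> {t. is_transf n t}"
      and "restrict t {..<n} = restrict u {..<n}"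
    then show "t q = u q"
      by (cases "q < n") (auto simp: is_transf_def dest: fun_cong[of _ _ q])
  qed
  have "(\<lambda>t. restrict t {..<n}) ` {t. is_transf n t} \<subseteq> (\<Pi>\<^sub>E q\<in>{..<n}. {..<n})"
    by (simp add: image_subset_iff is_transf_def)
  then show "finite ((\<lambda>t. restrict t {..<n}) ` {t. is_transf n t})"
    by (rule finite_subset) (simp add: finite_PiE)
qed

lemma funpow_in_set: "t ` A \<subseteq> A \<Longrightarrow> x \<in> A \<Longrightarrow> (t ^^ j) x \<in> A"
  by (induction j) auto

lemma funpow_eq_imp_eq:
  assumes "t ` A \<subseteq> A" and "inj_on t (A - {z})" and "t z = z"
    and "x \<in> A" and "y \<in> A"
  shows "(t ^^ j) x = (t ^^ j) y \<Longrightarrow> (t ^^ j) x \<noteq> z \<Longrightarrow> x = y"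
proof (induction j)
  case 0
  then show ?case by simp
next
  case (Suc j)
  let ?a = "(t ^^ j) x" and ?b = "(t ^^ j) y"
  have "t ?a = t ?b" and "t ?a \<noteq> z"
    using Suc.prems by simp_all
  then have "?a \<in> A - {z}" and "?b \<in> A - {z}"
    using funpow_in_set[OF assms(1)] assms(3-5) by (metis Diff_iff singletonD)+
  with \<open>t ?a = t ?b\<close> have "?a = ?b"
    using assms(2) by (meson inj_onD)
  then show ?case
    using Suc.IH \<open>?a \<in> A - {z}\<close> by blast
qed

lemma sgrp_gen_indecomposable:
  assumes "s \<in> sgrp_gen G" and "\<And>x y. x \<in> sgrp_gen G \<Longrightarrow> y \<in> sgrp_gen G \<Longrightarrow> s \<noteq> tmul x y"
  shows "s \<in> G"
  using assms by (cases rule: sgrp_gen.cases) auto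

lemma inj_on_not_tmul:
  assumes "n \<ge> 3" and "inj_on s {..<n-1}" and "x \<in> B_bf n" and "y \<in> B_bf n"
  shows "s \<noteq> tmul x y"
proof
  assume "s = tmul x y"
  with assms(2) have inj_yx: "inj_on (y \<circ> x) {..<n-1}"
    by (simp add: tmul_def)
  have "x q \<in> {1..<n}" if "q < n-1" for q
    using assms(3) that by (simp add: B_bf_def is_transf_def Suc_le_eq)
  then have "x ` {..<n-1} \<subseteq> {1..<n}"
    by blast
  moreover have "card (x ` {..<n-1}) = card {1..<n}"
    using card_image[OF inj_on_imageI2[OF inj_yx]] by simp
  ultimately have "x ` {..<n-1} = {1..<n}"
    by (simp add: card_subset_eq)
  with inj_on_imageI[OF inj_yx] have "inj_on y {1..<n}"
    by simp
  moreover have "y (n-2) = y (n-1)"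
    using assms(4) by (simp add: B_bf_def)
  moreover have "n-2 \<in> {1..<n}" "n-1 \<in> {1..<n}" "n-2 \<noteq> n-1"
    using assms(1) by auto
  ultimately show False
    by (metis inj_onD)
qed

definition perm_transf :: "nat \<Rightarrow> (nat \<Rightarrow> nat) \<Rightarrow> nat \<Rightarrow> nat" where
  "perm_transf n \<sigma> q = (if q < n-2 then Suc (\<sigma> q) else if q < n then n-1 else q)"

context
  fixes n :: nat and \<sigma> :: "nat \<Rightarrow> nat"
  assumes n: "n \<ge> 3" and \<sigma>: "\<sigma> permutes {..<n-2}"
begin

private lemma perm_transf_lt: "q < n-2 \<Longrightarrow> perm_transf n \<sigma> q < n-1"
  using permutes_in_image[OF \<sigma>, of q] by (simp add: perm_transf_def)

lemma inj_on_perm_transf: "inj_on (perm_transf n \<sigma>) {..<n-1}"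
proof -
  have "inj_on (perm_transf n \<sigma>) {..<n-2}"
    using permutes_inj[OF \<sigma>] by (auto intro!: inj_onI simp: perm_transf_def inj_eq)
  moreover have "perm_transf n \<sigma> (n-2) \<notin> perm_transf n \<sigma> ` {..<n-2}"
    using perm_transf_lt n by (force simp: perm_transf_def)
  moreover have "{..<n-1} = insert (n-2) {..<n-2}"
    using n by auto
  ultimately show ?thesis
    by simp
qed

lemma perm_transf_in_W5_bf: "perm_transf n \<sigma> \<in> W5_bf n"
proof -
  let ?t = "perm_transf n \<sigma>"
  have transf: "is_transf n ?t"
    using perm_transf_lt n by (force simp: is_transf_def perm_transf_def)
  have fixes_last: "?t (n-1) = n-1" "?t (n-2) = n-1"
    using n by (simp_all add: perm_transf_def)
  have "{..<n} - {n-1} = {..<n-1}"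
    using n by auto
  then have "inj_on ?t ({..<n} - {n-1})"
    using inj_on_perm_transf by simp
  then have orbits: "(?t ^^ j) 0 \<noteq> (?t ^^ j) q" if "(?t ^^ j) 0 \<noteq> n-1" "0 < q" "q < n-1" for j q
    using funpow_eq_imp_eq[of ?t "{..<n}" "n-1" 0 q j] transf fixes_last that n
    by (force simp: is_transf_def)
  have "?t \<in> B_bf n"
    using transf fixes_last orbits n by (auto simp: B_bf_def perm_transf_def)
  moreover have "?t p \<noteq> ?t q" if "p \<in> {1..n-3}" "q \<in> {1..n-3}" "p \<noteq> q" for p q
    using inj_onD[OF inj_on_perm_transf, of p q] that n by fastforce
  ultimately show ?thesis
    by (auto simp: W5_bf_def)
qed

end

lemma inj_on_perm_transf_permutations:
  "inj_on (perm_transf n) {\<sigma>. \<sigma> permutes {..<n-2}}"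
proof (rule inj_onI, rule ext)
  fix \<sigma> \<tau> q
  assume "\<sigma> \<in> {\<sigma>. \<sigma> permutes {..<n-2}}" "\<tau> \<in> {\<sigma>. \<sigma> permutes {..<n-2}}"
    and "perm_transf n \<sigma> = perm_transf n \<tau>"
  then show "\<sigma> q = \<tau> q"
    by (cases "q < n-2") (auto dest: fun_cong[of _ _ q] simp: permutes_not_in perm_transf_def)
qed

theorem mainTheorem10:
  fixes n :: nat and G :: "(nat \<Rightarrow> nat) set"
  assumes "n \<ge> 3"
    and "G \<subseteq> W5_bf n"
    and "sgrp_gen G = W5_bf n"
  shows "finite G \<and> fact (n - 2) \<le> card G"
proof
  have "W5_bf n \<subseteq> {t. is_transf n t}"
    by (auto simp: W5_bf_def B_bf_def)
  with assms(2) show fin: "finite G"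
    using finite_transf by (blast intro: finite_subset)
  let ?P = "{\<sigma>. \<sigma> permutes {..<n-2}}"
  have "perm_transf n ` ?P \<subseteq> G"
  proof clarify
    fix \<sigma> assume \<sigma>: "\<sigma> permutes {..<n-2}"
    show "perm_transf n \<sigma> \<in> G"
    proof (rule sgrp_gen_indecomposable)
      show "perm_transf n \<sigma> \<in> sgrp_gen G"
        using perm_transf_in_W5_bf[OF assms(1) \<sigma>] assms(3) by simp
      show "perm_transf n \<sigma> \<noteq> tmul x y" if "x \<in> sgrp_gen G" "y \<in> sgrp_gen G" for x y
        using inj_on_not_tmul[OF assms(1) inj_on_perm_transf[OF assms(1) \<sigma>]] that assms(3)
        by (simp add: W5_bf_def)
    qed
  qed
  moreover have "card (perm_transf n ` ?P) = fact (n-2)"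
    using card_image[OF inj_on_perm_transf_permutations] card_permutations[of "{..<n-2}" "n-2"]
    by simp
  ultimately show "fact (n-2) \<le> card G"
    using card_mono[OF fin] by metis
qed

end
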